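(* Let $S$ be a finite set, let $\mathcal{I}\subseteq 2^S$ be a downset of $(2^S,\subseteq)$, and let $T$ be a witnessing tree showing $\mathcal{I}\in\bullet(\{2^X\mid X\subseteq S\})$. Then $\mathrm{mult}_T(2^X)=\hat\mu_{\mathcal{I}}(X)$ for every $X\subseteq S$.
   Context: Here $2^X=\{Y\subseteq S\mid Y\subseteq X\}$ is the principal downset generated by $X$. For $\mathcal{C}\subseteq 2^S$, the generalized Möbius function $\hat\mu_{\mathcal{C}}:2^S\to\mathbb{Z}$ is defined by top-down induction: $\hat\mu_{\mathcal{C}}(X)=[X\in\mathcal{C}]-\sum_{X\subsetneq X'\subseteq S}\hat\mu_{\mathcal{C}}(X')$ (indicator $[X\in\mathcal{C}]\in\{0,1\}$). For sets $A,B$, $A\,\dot\cup\,B=A\cup B$ is defined only when $A\cap B=\emptyset$, and $A\,\dot\setminus\,B=A\setminus B$ is defined only when $B\subseteq A$. For a finite family $\mathcal{G}$ of sets, $\bullet(\mathcal{G})$ is the smallest family containing $\emptyset$ and every member of $\mathcal{G}$ and closed under well-defined disjoint unions and subset complements. A witnessing tree of $X\in\bullet(\mathcal{G})$ is a rooted ordered tree whose leaves are labelled by $\emptyset$ or members of $\mathcal{G}$ and whose internal nodes are labelled $\dot\cup$ or $\dot\setminus$ ($\dot\setminus$-nodes binary), such that evaluating internal nodes as the corresponding operations on their children's values is always well defined and the root evaluates to $X$. The polarity of a leaf $\ell$ is $1$ if the root-to-$\ell$ path goes to the right child of a $\dot\setminus$-node an even number of times and $-1$ otherwise; $\mathrm{mult}_T(U)$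 is the sum of the polarities of the leaves of $T$ labelled $U$ (so it is $0$ if no leaf is labelled $U$). *)

theory Defs
  imports Main
begin

function mu_hat :: "'a set \<Rightarrow> 'a set set \<Rightarrow> 'a set \<Rightarrow> int" where
  "mu_hat S C X =
     (if finite S \<and> X \<subseteq> S then
        (if X \<in> C then 1 else 0) - (\<Sum>X'\<in>{X'. X \<subset> X' \<and> X' \<subseteq> S}. mu_hat S C X')
      else 0)"
  by auto
termination
proof (relation "measure (\<lambda>(S, C, X). card (S - X))")
  show "wf (measure (\<lambda>(S, C, X). card (S - X)))" by simp
next
  fix S :: "'a set" and C X X'
  assume "finite S \<and> X \<subseteq> S" and "X' \<in> {X'. X \<subset> X' \<and> X' \<subseteq> S}"
  then have "S - X' \<subset> S - X" "finite (S - X)" by auto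
  then show "((S, C, X'), (S, C, X)) \<in> measure (\<lambda>(S, C, X). card (S - X))"
    by (simp add: psubset_card_mono)
qed

text \<open>Rooted ordered trees: leaves carry a label (a set), DUnion nodes are
  disjoint-union nodes with an ordered list of children, DMinus nodes are binary
  subset-complement nodes (left child minus right child).\<close>

datatype 'b wtree = Leaf 'b | DUnion "'b wtree list" | DMinus "'b wtree" "'b wtree"

fun wt_eval :: "'c set wtree \<Rightarrow> 'c set option" where
  "wt_eval (Leaf V) = Some V"
| "wt_eval (DUnion ts) =
     (let vs = map wt_eval ts in
      if ts \<noteq> [] \<and> (\<forall>v\<in>set vs. v \<noteq> None)
         \<and> (\<forall>i<length vs. \<forall>j<length vs. i \<noteq> j \<longrightarrow> the (vs ! i) \<inter> the (vs ! j) = {})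
      then Some (\<Union> (set (map the vs))) else None)"
| "wt_eval (DMinus a b) =
     (case (wt_eval a, wt_eval b) of
        (Some A, Some B) \<Rightarrow> if B \<subseteq> A then Some (A - B) else None
      | _ \<Rightarrow> None)"

fun wt_leaves :: "'b wtree \<Rightarrow> ('b \<times> int) list" where
  "wt_leaves (Leaf V) = [(V, 1)]"
| "wt_leaves (DUnion ts) = concat (map wt_leaves ts)"
| "wt_leaves (DMinus a b) = wt_leaves a @ map (\<lambda>(V, p). (V, - p)) (wt_leaves b)"

definition wt_mult :: "'b wtree \<Rightarrow> 'b \<Rightarrow> int" where
  "wt_mult T U = sum_list (map snd (filter (\<lambda>(V, p). V = U) (wt_leaves T)))"

definition witnessing_tree :: "'c set set \<Rightarrow> 'c set wtree \<Rightarrow> 'c set \<Rightarrow> bool" where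
  "witnessing_tree G T X \<longleftrightarrow>
     (\<forall>(V, p)\<in>set (wt_leaves T). V = {} \<or> V \<in> G) \<and> wt_eval T = Some X"

definition downset :: "'a set \<Rightarrow> 'a set set \<Rightarrow> bool" where
  "downset S I \<longleftrightarrow> I \<subseteq> Pow S \<and> (\<forall>A\<in>I. \<forall>B. B \<subseteq> A \<longrightarrow> B \<in> I)"

end

theory Submission
  imports Defs
begin

text \<open>Disjoint union adds indicator functions and subset complement subtracts them, so the
  indicator of the value of a witnessing tree is the polarity-weighted sum of the indicators of
  its leaf labels. When the leaves are principal downsets, evaluating this at a set Y gives
  [Y \<in> I] = sum of mult_T(2^X) over all X with Y \<subseteq> X \<subseteq> S. That is exactly the triangular
  system defining mu_hat top-down, and a triangular system has only one solution.\<close>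

lemma sum_list_of_bool_pairwise_disjoint:
  assumes "\<forall>i<length Vs. \<forall>j<length Vs. i \<noteq> j \<longrightarrow> Vs ! i \<inter> Vs ! j = {}"
  shows "(\<Sum>V\<leftarrow>Vs. of_bool (y \<in> V)) = (of_bool (y \<in> \<Union> (set Vs)) :: int)"
proof (cases "\<exists>i<length Vs. y \<in> Vs ! i")
  case True
  then obtain i where i: "i < length Vs" "y \<in> Vs ! i" by blast
  have "(\<Sum>V\<leftarrow>Vs. of_bool (y \<in> V)) = (\<Sum>j<length Vs. of_bool (y \<in> Vs ! j) :: int)"
    by (simp add: sum_list_sum_nth atLeast0LessThan)
  also have "\<dots> = (\<Sum>j<length Vs. if j = i then 1 else 0)"
    using assms i by (intro sum.cong) auto
  also have "\<dots> = 1" using i by simp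
  finally show ?thesis using i nth_mem by fastforce
next
  case False
  then show ?thesis by (auto simp: sum_list_sum_nth in_set_conv_nth)
qed

lemma of_bool_wt_eval:
  "wt_eval T = Some V \<Longrightarrow> of_bool (y \<in> V) = (\<Sum>(L, p)\<leftarrow>wt_leaves T. p * of_bool (y \<in> L))"
proof (induction T arbitrary: V)
  case (Leaf L)
  then show ?case by simp
next
  case (DUnion ts)
  let ?Vs = "map (the \<circ> wt_eval) ts"
  have defined: "\<And>t. t \<in> set ts \<Longrightarrow> wt_eval t = Some (the (wt_eval t))"
    and disjoint: "\<forall>i<length ?Vs. \<forall>j<length ?Vs. i \<noteq> j \<longrightarrow> ?Vs ! i \<inter> ?Vs ! j = {}"
    and V: "V = \<Union> (set ?Vs)"
    using DUnion.prems by (auto simp: Let_def split: if_splits)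
  have "of_bool (y \<in> V) = (\<Sum>W\<leftarrow>?Vs. of_bool (y \<in> W) :: int)"
    unfolding V by (rule sum_list_of_bool_pairwise_disjoint[OF disjoint, symmetric])
  also have "\<dots> = (\<Sum>t\<leftarrow>ts. \<Sum>(L, p)\<leftarrow>wt_leaves t. p * of_bool (y \<in> L))"
    using DUnion.IH defined by (simp add: comp_def cong: map_cong)
  also have "\<dots> = (\<Sum>(L, p)\<leftarrow>wt_leaves (DUnion ts). p * of_bool (y \<in> L))"
    by (induction ts) simp_all
  finally show ?case .
next
  case (DMinus a b)
  then obtain A B where A: "wt_eval a = Some A" and B: "wt_eval b = Some B"
    and "B \<subseteq> A" and "V = A - B"
    by (auto split: option.splits if_splits)
  then have "of_bool (y \<in> V) = of_bool (y \<in> A) - (of_bool (y \<in> B) :: int)"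
    by auto
  then show ?case using DMinus.IH(1)[OF A] DMinus.IH(2)[OF B]
    by (simp add: comp_def case_prod_unfold uminus_sum_list_map)
qed

lemma sum_wt_leaves_eq_sum_wt_mult:
  fixes f :: "'b \<Rightarrow> int"
  assumes "finite A" and "\<forall>(L, p)\<in>set (wt_leaves T). L \<in> A"
  shows "(\<Sum>(L, p)\<leftarrow>wt_leaves T. p * f L) = (\<Sum>L\<in>A. wt_mult T L * f L)"
proof -
  have "(\<Sum>(L, p)\<leftarrow>xs. p * f L) = (\<Sum>L\<in>A. sum_list (map snd (filter (\<lambda>(V, p). V = L) xs)) * f L)"
    if "\<forall>(L, p)\<in>set xs. L \<in> A" for xs :: "('b \<times> int) list"
    using that
  proof (induction xs)
    case Nil
    then show ?case by simp
  next
    case (Cons x xs)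
    obtain L0 p0 where x: "x = (L0, p0)" by fastforce
    have "L0 \<in> A" using Cons.prems x by auto
    have "(\<Sum>L\<in>A. sum_list (map snd (filter (\<lambda>(V, p). V = L) (x # xs))) * f L)
        = (\<Sum>L\<in>A. (if L = L0 then p0 * f L0 else 0)
                   + sum_list (map snd (filter (\<lambda>(V, p). V = L) xs)) * f L)"
      by (rule sum.cong) (auto simp: x algebra_simps)
    also have "\<dots> = p0 * f L0 + (\<Sum>L\<in>A. sum_list (map snd (filter (\<lambda>(V, p). V = L) xs)) * f L)"
      using assms(1) \<open>L0 \<in> A\<close> by (simp add: sum.distrib)
    finally show ?case using Cons x by simp
  qed
  then show ?thesis using assms(2) by (simp add: wt_mult_def)
qed

lemma mu_hat_unique:
  fixes m :: "'a set \<Rightarrow> int"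
  assumes "finite S"
    and "\<And>Y. Y \<subseteq> S \<Longrightarrow> of_bool (Y \<in> C) = (\<Sum>X | Y \<subseteq> X \<and> X \<subseteq> S. m X)"
  shows "Y \<subseteq> S \<Longrightarrow> m Y = mu_hat S C Y"
proof (induction "card (S - Y)" arbitrary: Y rule: less_induct)
  case less
  have finite_supsets: "finite {X. Y \<subset> X \<and> X \<subseteq> S}"
    using assms(1) by (auto intro: finite_subset[of _ "Pow S"])
  have "{X. Y \<subseteq> X \<and> X \<subseteq> S} = insert Y {X. Y \<subset> X \<and> X \<subseteq> S}"
    using less.prems by auto
  then have "m Y = of_bool (Y \<in> C) - (\<Sum>X | Y \<subset> X \<and> X \<subseteq> S. m X)"
    using assms(2)[OF less.prems] finite_supsets by simp
  also have "(\<Sum>X | Y \<subset> X \<and> X \<subseteq> S. m X) = (\<Sum>X | Y \<subset> X \<and> X \<subseteq> S. mu_hat S C X)"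
  proof (rule sum.cong[OF refl])
    fix X assume X: "X \<in> {X. Y \<subset> X \<and> X \<subseteq> S}"
    then have "card (S - X) < card (S - Y)"
      using assms(1) by (intro psubset_card_mono) auto
    then show "m X = mu_hat S C X" using less.hyps X by blast
  qed
  also have "of_bool (Y \<in> C) - \<dots> = mu_hat S C Y"
    using assms(1) less.prems by (subst (2) mu_hat.simps) (simp del: mu_hat.simps)
  finally show ?case .
qed

lemma of_bool_mem_eq_sum_wt_mult_Pow:
  assumes "finite S" and "witnessing_tree {Pow X | X. X \<subseteq> S} T I"
  shows "of_bool (Y \<in> I) = (\<Sum>X | Y \<subseteq> X \<and> X \<subseteq> S. wt_mult T (Pow X))"
proof -
  have eval: "wt_eval T = Some I"
    and leaves: "\<forall>(L, p)\<in>set (wt_leaves T). L \<in> insert {} (Pow ` Pow S)"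
    using assms(2) unfolding witnessing_tree_def by auto
  have "of_bool (Y \<in> I) = (\<Sum>(L, p)\<leftarrow>wt_leaves T. p * of_bool (Y \<in> L))"
    by (rule of_bool_wt_eval[OF eval])
  also have "\<dots> = (\<Sum>L\<in>insert {} (Pow ` Pow S). wt_mult T L * of_bool (Y \<in> L))"
    using assms(1) leaves by (intro sum_wt_leaves_eq_sum_wt_mult) auto
  also have "\<dots> = (\<Sum>L\<in>Pow ` Pow S. wt_mult T L * of_bool (Y \<in> L))"
    using assms(1) by (subst sum.insert) auto
  also have "\<dots> = (\<Sum>X\<in>Pow S. wt_mult T (Pow X) * of_bool (Y \<subseteq> X))"
    by (subst sum.reindex) (auto simp: inj_on_def)
  also have "\<dots> = (\<Sum>X\<in>{X\<in>Pow S. Y \<subseteq> X}. wt_mult T (Pow X))"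
    using assms(1) by (simp add: sum.inter_filter Int_def)
  also have "{X\<in>Pow S. Y \<subseteq> X} = {X. Y \<subseteq> X \<and> X \<subseteq> S}"
    by auto
  finally show ?thesis .
qed

theorem proposition5p8:
  fixes S :: "'a set" and I :: "'a set set" and T :: "'a set set wtree"
  assumes "finite S"
    and "downset S I"
    and "witnessing_tree {Pow X | X. X \<subseteq> S} T I"
  shows "\<forall>X. X \<subseteq> S \<longrightarrow> wt_mult T (Pow X) = mu_hat S I X"
  using mu_hat_unique[OF assms(1) of_bool_mem_eq_sum_wt_mult_Pow[OF assms(1,3)]] by blast

end
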